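(* Let $\Phi:\mathbb{R}^N\to\mathbb{R}^M$ and $L:\mathbb{R}^P\to\mathbb{R}^N$ be linear operators, let $\|\cdot\|_A$ be a norm on $\mathbb{R}^P$ with dual norm $\|\cdot\|_A^*$, and set $R(x)=\|L^*x\|_A$. Let $x_0\in\mathbb{R}^N$, and assume $\|\cdot\|_A$ is decomposable at $u_0=L^*x_0$ with associated subspace $T_0$ and vector $e_0\in T_0$; let $S_0=T_0^\perp$. Assume there exist $\eta\in\mathbb{R}^M$ and $\alpha\in\partial\|\cdot\|_A(L^*x_0)$ with $\Phi^*\eta=L\alpha$ and $\|\alpha_{S_0}\|_A^*<1$, and that $\Phi$ is injective on $\ker(L_{S_0}^* )$. Then there exist constants $C_1>0$, $C_2>0$, independent of $\eta$ and $\alpha$, such that the following holds: for every $\varepsilon>0$, every $w\in\mathbb{R}^M$ with $\|w\|_2\le\varepsilon$, $y=\Phi x_0+w$, every $c>0$ and $\lambda=c\varepsilon$, any minimizer $x^\star$ of $\min_{x\in\mathbb{R}^N}\tfrac12\|y-\Phi x\|_2^2+\lambda R(x)$ satisfies $$\|x^\star-x_0\|_2\le C\varepsilon,\qquad C=C_1\bigl(2+c\|\eta\|_2\bigr)+C_2\frac{(1+c\|\eta\|_2/2)^2}{c\,(1-\|\alpha_{S_0}\|_A^* )}.$$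
   Context: For a subspace $V\subset\mathbb{R}^P$, $P_V$ denotes the orthogonal projector onto $V$, and $L_V=LP_V$, $L_V^*=P_VL^*$, $\alpha_V=P_V\alpha$ for $\alpha\in\mathbb{R}^P$. A norm $\|\cdot\|_A$ on $\mathbb{R}^P$ is decomposable at $u\in\mathbb{R}^P$ if (i) there exist a subspace $T\subset\mathbb{R}^P$ and a vector $e\in T$ such that $\partial\|\cdot\|_A(u)=\{\alpha\in\mathbb{R}^P:\ \alpha_T=e,\ \|\alpha_{T^\perp}\|_A^*\le 1\}$, and (ii) for every $z\in T^\perp$, $\|z\|_A=\sup\{\langle v,z\rangle: v\in T^\perp,\ \|v\|_A^*\le 1\}$. *)

theory Defs
  imports "HOL-Analysis.Analysis"
begin

definition proj :: "'a::euclidean_space set \<Rightarrow> 'a \<Rightarrow> 'a" where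
  "proj V x = (THE v. v \<in> V \<and> (\<forall>y\<in>V. orthogonal (x - v) y))"

definition is_norm :: "('a::real_vector \<Rightarrow> real) \<Rightarrow> bool" where
  "is_norm nA \<longleftrightarrow> (\<forall>x. 0 \<le> nA x) \<and> (\<forall>x. nA x = 0 \<longleftrightarrow> x = 0)
     \<and> (\<forall>c x. nA (c *\<^sub>R x) = \<bar>c\<bar> * nA x) \<and> (\<forall>x y. nA (x + y) \<le> nA x + nA y)"

definition dual_norm :: "('a::real_inner \<Rightarrow> real) \<Rightarrow> 'a \<Rightarrow> real" where
  "dual_norm nA v = Sup {v \<bullet> z | z. nA z \<le> 1}"

definition subdiff :: "('a::real_inner \<Rightarrow> real) \<Rightarrow> 'a \<Rightarrow> 'a set" where
  "subdiff f u = {a. \<forall>z. f u + a \<bullet> (z - u) \<le> f z}"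

definition decomposable_at :: "('a::euclidean_space \<Rightarrow> real) \<Rightarrow> 'a \<Rightarrow> 'a set \<Rightarrow> 'a \<Rightarrow> bool" where
  "decomposable_at nA u T e \<longleftrightarrow> subspace T \<and> e \<in> T
     \<and> subdiff nA u = {a. proj T a = e \<and> dual_norm nA (proj (orthogonal_comp T) a) \<le> 1}
     \<and> (\<forall>z \<in> orthogonal_comp T.
          nA z = Sup {v \<bullet> z | v. v \<in> orthogonal_comp T \<and> dual_norm nA v \<le> 1})"

end

theory Submission
  imports Defs
begin

text \<open>Put \<open>h = x\<^sup>\<star> - x\<^sub>0\<close> and \<open>\<lambda> = c \<epsilon>\<close>. Comparing the objective at \<open>x\<^sup>\<star>\<close> with
  its value at \<open>x\<^sub>0\<close> and using the source condition \<open>\<Phi>\<^sup>* \<eta> = L \<alpha>\<close> gives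
  \<open>\<parallel>\<Phi> h\<parallel>\<^sup>2/2 + \<lambda> D \<le> (\<epsilon> + \<lambda> \<parallel>\<eta>\<parallel>) \<parallel>\<Phi> h\<parallel>\<close> for the Bregman distance
  \<open>D = R(x\<^sup>\<star>) - \<langle>\<alpha>, L\<^sup>* x\<^sup>\<star>\<rangle>\<close>, which bounds both \<open>\<parallel>\<Phi> h\<parallel>\<close> and \<open>\<lambda> D\<close>.
  Decomposability yields \<open>D \<ge> (1 - \<parallel>\<alpha>\<^sub>S\<^sub>0\<parallel>\<^sub>A\<^sup>*) \<parallel>P\<^sub>S\<^sub>0 L\<^sup>* x\<^sup>\<star>\<parallel>\<^sub>A\<close>, and \<open>P\<^sub>S\<^sub>0 L\<^sup>* x\<^sub>0 = 0\<close>,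
  so \<open>D\<close> controls \<open>P\<^sub>S\<^sub>0 L\<^sup>* h\<close>. Injectivity of \<open>\<Phi>\<close> on \<open>ker (P\<^sub>S\<^sub>0 L\<^sup>*)\<close> makes
  \<open>\<parallel>\<Phi> h\<parallel> + \<parallel>P\<^sub>S\<^sub>0 L\<^sup>* h\<parallel>\<close> dominate \<open>B \<parallel>h\<parallel>\<close>; with \<open>k \<parallel>\<cdot>\<parallel> \<le> \<parallel>\<cdot>\<parallel>\<^sub>A\<close> one may take
  \<open>C\<^sub>1 = 2/B\<close> and \<open>C\<^sub>2 = 2/(B k)\<close>.\<close>

lemma proj_unique:
  fixes V :: "'a::euclidean_space set"
  assumes "subspace V" "v \<in> V" "\<And>y. y \<in> V \<Longrightarrow> orthogonal (x - v) y"
  shows "proj V x = v"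
  unfolding proj_def
proof (rule the_equality)
  show "v \<in> V \<and> (\<forall>y\<in>V. orthogonal (x - v) y)" using assms(2,3) by blast
next
  fix v' assume v': "v' \<in> V \<and> (\<forall>y\<in>V. orthogonal (x - v') y)"
  have "v - v' \<in> V" using assms(1,2) v' by (simp add: subspace_diff)
  then have "(x - v') \<bullet> (v - v') = 0" "(x - v) \<bullet> (v - v') = 0"
    using v' assms(3) unfolding orthogonal_def by blast+
  then have "(v - v') \<bullet> (v - v') = 0" by (simp add: inner_diff_left)
  then show "v' = v" by simp
qed

lemma
  fixes V :: "'a::euclidean_space set"
  assumes "subspace V"
  shows proj_in: "proj V x \<in> V"
    and proj_orthogonal: "y \<in> V \<Longrightarrow> orthogonal (x - proj V x) y"
proof -
  obtain p q where "p \<in> span V" "\<And>w. w \<in> span V \<Longrightarrow> orthogonal q w" "x = p + q"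
    using orthogonal_subspace_decomp_exists by blast
  moreover have "span V = V" using assms by simp
  ultimately have "p \<in> V" "\<And>w. w \<in> V \<Longrightarrow> orthogonal (x - p) w" by auto
  moreover from this have "proj V x = p" by (rule proj_unique[OF assms])
  ultimately show "proj V x \<in> V" "y \<in> V \<Longrightarrow> orthogonal (x - proj V x) y" by auto
qed

lemma linear_proj:
  fixes V :: "'a::euclidean_space set"
  assumes "subspace V"
  shows "linear (proj V)"
proof (rule linearI)
  fix a b
  show "proj V (a + b) = proj V a + proj V b"
  proof (rule proj_unique[OF assms])
    show "proj V a + proj V b \<in> V" by (simp add: assms proj_in subspace_add)
    fix y assume "y \<in> V"
    then show "orthogonal (a + b - (proj V a + proj V b)) y"
      using proj_orthogonal[OF assms, of y a] proj_orthogonal[OF assms, of y b]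
      by (simp add: orthogonal_def inner_add_left inner_diff_left)
  qed
next
  fix c :: real and a
  show "proj V (c *\<^sub>R a) = c *\<^sub>R proj V a"
  proof (rule proj_unique[OF assms])
    show "c *\<^sub>R proj V a \<in> V" by (simp add: assms proj_in subspace_scale)
    fix y assume "y \<in> V"
    then show "orthogonal (c *\<^sub>R a - c *\<^sub>R proj V a) y"
      using proj_orthogonal[OF assms, of y a]
      by (simp add: orthogonal_def inner_diff_left)
  qed
qed

lemma inner_proj_right:
  fixes V :: "'a::euclidean_space set"
  assumes "subspace V" "s \<in> V"
  shows "s \<bullet> proj V x = s \<bullet> x"
  using proj_orthogonal[OF assms, of x]
  by (simp add: orthogonal_def inner_diff_left inner_diff_right inner_commute)

lemma proj_orthogonal_comp_add:
  fixes T :: "'a::euclidean_space set"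
  assumes "subspace T" "e \<in> T" "v \<in> T\<^sup>\<bottom>"
  shows "proj (T\<^sup>\<bottom>) (e + v) = v"
  using assms
  by (intro proj_unique subspace_orthogonal_comp)
     (auto simp: orthogonal_comp_def orthogonal_commute)

lemma
  assumes "is_norm nA"
  shows is_norm_nonneg: "0 \<le> nA x"
    and is_norm_eq_0_iff: "nA x = 0 \<longleftrightarrow> x = 0"
    and is_norm_scaleR: "nA (c *\<^sub>R x) = \<bar>c\<bar> * nA x"
    and is_norm_triangle: "nA (x + y) \<le> nA x + nA y"
  using assms unfolding is_norm_def by blast+

lemma is_norm_zero: "is_norm nA \<Longrightarrow> nA 0 = 0"
  by (simp add: is_norm_eq_0_iff)

lemma is_norm_convex_on:
  fixes nA :: "'a::real_vector \<Rightarrow> real"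
  assumes "is_norm nA"
  shows "convex_on UNIV nA"
proof (rule convex_onI[OF _ convex_UNIV])
  fix t :: real and x y :: 'a
  assume "0 < t" "t < 1"
  then show "nA ((1 - t) *\<^sub>R x + t *\<^sub>R y) \<le> (1 - t) * nA x + t * nA y"
    using assms is_norm_triangle[of nA "(1 - t) *\<^sub>R x" "t *\<^sub>R y"] by (simp add: is_norm_scaleR)
qed

lemma is_norm_bounded_below:
  fixes nA :: "'a::euclidean_space \<Rightarrow> real"
  assumes "is_norm nA"
  obtains k where "k > 0" "\<And>x. k * norm x \<le> nA x"
proof -
  have "continuous_on (sphere 0 1) nA"
    using convex_on_continuous[OF open_UNIV is_norm_convex_on[OF assms]]
    by (rule continuous_on_subset) simp
  moreover have "sphere (0::'a) 1 \<noteq> {}" by simp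
  ultimately obtain u where u: "u \<in> sphere 0 1" "\<And>y. y \<in> sphere 0 1 \<Longrightarrow> nA u \<le> nA y"
    using continuous_attains_inf[OF compact_sphere] by blast
  have "nA u > 0"
    using u(1) is_norm_nonneg[OF assms, of u] is_norm_eq_0_iff[OF assms, of u] by auto
  moreover have "nA u * norm x \<le> nA x" for x
  proof (cases "x = 0")
    case False
    then have "nA u \<le> nA (x /\<^sub>R norm x)" by (intro u(2)) simp
    also have "\<dots> = nA x / norm x" by (simp add: is_norm_scaleR[OF assms] divide_inverse_commute)
    finally show ?thesis using False by (simp add: pos_le_divide_eq)
  qed (simp add: is_norm_zero[OF assms])
  ultimately show thesis by (rule that)
qed

lemma inner_le_norm_div:
  fixes nA :: "'a::euclidean_space \<Rightarrow> real"
  assumes "k > 0" "\<And>x. k * norm x \<le> nA x" "nA z \<le> 1"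
  shows "v \<bullet> z \<le> norm v / k"
proof -
  have "norm z \<le> 1 / k" using assms by (simp add: field_simps) (use order.trans in blast)
  then have "v \<bullet> z \<le> norm v * (1 / k)"
    using norm_cauchy_schwarz[of v z] by (meson mult_left_mono norm_ge_zero order.trans)
  then show ?thesis by simp
qed

lemma dual_norm_le:
  fixes nA :: "'a::euclidean_space \<Rightarrow> real"
  assumes "is_norm nA" "k > 0" "\<And>x. k * norm x \<le> nA x"
  shows "dual_norm nA v \<le> norm v / k"
  unfolding dual_norm_def
proof (rule cSup_least)
  have "v \<bullet> 0 \<in> {v \<bullet> z |z. nA z \<le> 1}"
    using is_norm_zero[OF assms(1)] by (intro CollectI exI[of _ 0]) simp
  then show "{v \<bullet> z |z. nA z \<le> 1} \<noteq> {}" by blast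
qed (use inner_le_norm_div[OF assms(2,3)] in blast)

lemma inner_le_dual_norm:
  fixes nA :: "'a::euclidean_space \<Rightarrow> real"
  assumes "is_norm nA"
  shows "v \<bullet> z \<le> dual_norm nA v * nA z"
proof (cases "z = 0")
  case False
  obtain k where k: "k > 0" "\<And>x. k * norm x \<le> nA x" using is_norm_bounded_below[OF assms] by blast
  have pos: "nA z > 0" using False is_norm_nonneg[OF assms] is_norm_eq_0_iff[OF assms]
    by (metis less_eq_real_def)
  have "v \<bullet> (z /\<^sub>R nA z) \<le> dual_norm nA v"
    unfolding dual_norm_def
  proof (rule cSup_upper)
    show "v \<bullet> (z /\<^sub>R nA z) \<in> {v \<bullet> z |z. nA z \<le> 1}"
      using pos by (intro CollectI exI[of _ "z /\<^sub>R nA z"]) (simp add: is_norm_scaleR[OF assms])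
    show "bdd_above {v \<bullet> z |z. nA z \<le> 1}"
      by (rule bdd_aboveI[where M = "norm v / k"]) (use inner_le_norm_div[OF k] in blast)
  qed
  then show ?thesis using pos by (simp add: field_simps)
qed (simp add: is_norm_zero[OF assms])

lemma subdiff_norm_inner_eq:
  assumes "is_norm nA" "a \<in> subdiff nA u"
  shows "a \<bullet> u = nA u"
proof -
  have "nA u + a \<bullet> (0 - u) \<le> nA 0" "nA u + a \<bullet> ((u + u) - u) \<le> nA (u + u)"
    using assms(2) unfolding subdiff_def by blast+
  moreover have "nA (u + u) \<le> nA u + nA u" by (rule is_norm_triangle[OF assms(1)])
  ultimately show ?thesis by (simp add: is_norm_zero[OF assms(1)] inner_diff_right)
qed

lemma subdiff_norm_inner_le:
  assumes "is_norm nA" "a \<in> subdiff nA u"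
  shows "a \<bullet> z \<le> nA z"
  using assms(2) subdiff_norm_inner_eq[OF assms]
  by (simp add: subdiff_def inner_diff_right)

lemma dual_norm_zero_le_one:
  fixes nA :: "'a::euclidean_space \<Rightarrow> real"
  assumes "is_norm nA"
  shows "dual_norm nA 0 \<le> 1"
proof -
  obtain k where "k > 0" "\<And>x. k * norm x \<le> nA x" using is_norm_bounded_below[OF assms] by blast
  then show ?thesis using dual_norm_le[OF assms, of k 0] by simp
qed

lemma decomposable_at_subdiffI:
  fixes nA :: "'a::euclidean_space \<Rightarrow> real"
  assumes "decomposable_at nA u T e" "v \<in> T\<^sup>\<bottom>" "dual_norm nA v \<le> 1"
  shows "e + v \<in> subdiff nA u"
proof -
  have T: "subspace T" "e \<in> T"
    and subdiff_eq: "subdiff nA u = {a. proj T a = e \<and> dual_norm nA (proj (T\<^sup>\<bottom>) a) \<le> 1}"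
    using assms(1) unfolding decomposable_at_def by auto
  have "proj T (e + v) = e"
    using T assms(2) by (intro proj_unique) (auto simp: orthogonal_comp_def orthogonal_commute)
  then show ?thesis
    using subdiff_eq proj_orthogonal_comp_add[OF T assms(2)] assms(3) by simp
qed

lemma decomposable_at_proj_subdiff:
  fixes nA :: "'a::euclidean_space \<Rightarrow> real"
  assumes "decomposable_at nA u T e" "a \<in> subdiff nA u"
  shows "proj (T\<^sup>\<bottom>) a = a - e"
proof -
  have T: "subspace T" "e \<in> T" and "proj T a = e"
    using assms unfolding decomposable_at_def by auto
  then have "a - e \<in> T\<^sup>\<bottom>"
    using proj_orthogonal[OF T(1), of _ a] by (auto simp: orthogonal_comp_def orthogonal_commute)
  from proj_orthogonal_comp_add[OF T this] show ?thesis by simp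
qed

lemma decomposable_at_proj_point:
  fixes nA :: "'a::euclidean_space \<Rightarrow> real"
  assumes "is_norm nA" "decomposable_at nA u T e"
  shows "proj (T\<^sup>\<bottom>) u = 0"
proof (rule ccontr)
  \<comment> \<open>\<open>e + v\<close> is a subgradient for all \<open>v\<close> in a ball of \<open>T\<^sup>\<bottom>\<close> around \<open>0\<close>, and every
    subgradient pairs with \<open>u\<close> to \<open>nA u\<close>; so \<open>u\<close> is orthogonal to that ball.\<close>
  define p where "p = proj (T\<^sup>\<bottom>) u"
  assume "proj (T\<^sup>\<bottom>) u \<noteq> 0"
  then have p_pos: "norm p > 0" unfolding p_def by simp
  obtain k where k: "k > 0" "\<And>x. k * norm x \<le> nA x" using is_norm_bounded_below[OF assms(1)] by blast
  define v where "v = (k / norm p) *\<^sub>R p"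
  have vS: "v \<in> T\<^sup>\<bottom>"
    unfolding v_def p_def by (intro subspace_scale proj_in subspace_orthogonal_comp)
  have "dual_norm nA v \<le> 1"
    using dual_norm_le[OF assms(1) k, of v] k(1) p_pos by (simp add: v_def)
  then have "(e + v) \<bullet> u = nA u" "(e + 0) \<bullet> u = nA u"
    using assms vS subspace_0[OF subspace_orthogonal_comp] dual_norm_zero_le_one[OF assms(1)]
    by (blast intro: subdiff_norm_inner_eq decomposable_at_subdiffI)+
  then have "v \<bullet> p = 0"
    unfolding p_def inner_proj_right[OF subspace_orthogonal_comp vS] by (simp add: inner_add_left)
  moreover have "v \<bullet> p = k * norm p"
    unfolding v_def using p_pos by (simp add: dot_square_norm power2_eq_square)
  ultimately show False using k(1) p_pos by simp
qed

lemma decomposable_at_bregman_lower_bound: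
  fixes nA :: "'a::euclidean_space \<Rightarrow> real"
  assumes "is_norm nA" "decomposable_at nA u T e" "a \<in> subdiff nA u"
  shows "(1 - dual_norm nA (proj (T\<^sup>\<bottom>) a)) * nA (proj (T\<^sup>\<bottom>) z) \<le> nA z - a \<bullet> z"
proof -
  let ?S = "T\<^sup>\<bottom>"
  define p where "p = proj ?S a"
  define q where "q = proj ?S z"
  have S: "subspace ?S" by (rule subspace_orthogonal_comp)
  have "p \<in> ?S" "q \<in> ?S" unfolding p_def q_def by (simp_all add: S proj_in)
  \<comment> \<open>Test the subgradients \<open>e + v\<close> against \<open>z\<close> and take the supremum over \<open>v\<close>,
    which recovers \<open>nA q\<close> by part (ii) of decomposability.\<close>
  have bound: "v \<bullet> q \<le> (nA z - a \<bullet> z) + dual_norm nA p * nA q"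
    if v: "v \<in> ?S" "dual_norm nA v \<le> 1" for v
  proof -
    have "(e + v) \<bullet> z \<le> nA z"
      using assms(1) decomposable_at_subdiffI[OF assms(2) v] by (rule subdiff_norm_inner_le)
    moreover have "a = e + p"
      unfolding p_def decomposable_at_proj_subdiff[OF assms(2,3)] by simp
    moreover have "(v - p) \<bullet> q = (v - p) \<bullet> z"
      unfolding q_def using S \<open>p \<in> ?S\<close> v(1) by (intro inner_proj_right subspace_diff)
    moreover have "p \<bullet> q \<le> dual_norm nA p * nA q" by (rule inner_le_dual_norm[OF assms(1)])
    ultimately show ?thesis by (simp add: inner_add_left inner_diff_left)
  qed
  have "0 \<bullet> q \<in> {v \<bullet> q | v. v \<in> ?S \<and> dual_norm nA v \<le> 1}"
    using S dual_norm_zero_le_one[OF assms(1)] by (blast intro: subspace_0)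
  then have "Sup {v \<bullet> q | v. v \<in> ?S \<and> dual_norm nA v \<le> 1}
      \<le> (nA z - a \<bullet> z) + dual_norm nA p * nA q"
    by (intro cSup_least) (use bound in blast)+
  moreover have "nA q = Sup {v \<bullet> q | v. v \<in> ?S \<and> dual_norm nA v \<le> 1}"
    using assms(2) \<open>q \<in> ?S\<close> unfolding decomposable_at_def by blast
  ultimately have "nA q \<le> (nA z - a \<bullet> z) + dual_norm nA p * nA q" by simp
  then show ?thesis unfolding p_def q_def by (simp add: left_diff_distrib)
qed

lemma linear_inj_on_kernel_bounded_below:
  fixes f :: "'a::euclidean_space \<Rightarrow> 'b::euclidean_space"
    and g :: "'a \<Rightarrow> 'c::euclidean_space"
  assumes "linear f" "linear g" "inj_on f {x. g x = 0}"
  obtains B where "B > 0" "\<And>x. B * norm x \<le> norm (f x) + norm (g x)"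
proof -
  have lin: "linear (\<lambda>x. (f x, g x))"
    using assms(1,2) by (simp add: linear_iff)
  have "inj (\<lambda>x. (f x, g x))"
  proof (rule injI)
    fix x y assume "(f x, g x) = (f y, g y)"
    then have "f (x - y) = f 0" "g (x - y) = 0"
      by (simp_all add: linear_diff[OF assms(1)] linear_diff[OF assms(2)] linear_0[OF assms(1)])
    then have "x - y = 0" using assms(3) linear_0[OF assms(2)] unfolding inj_on_def by blast
    then show "x = y" by simp
  qed
  then obtain B where B: "B > 0" "\<And>x. B * norm x \<le> norm (f x, g x)"
    using linear_inj_bounded_below_pos[OF lin] by blast
  show thesis
  proof (rule that[OF B(1)])
    show "B * norm x \<le> norm (f x) + norm (g x)" for x
      using B(2)[of x] norm_Pair_le[of "f x" "g x"] by linarith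
  qed
qed

lemma quadratic_inequality_bounds:
  fixes a b A :: real
  assumes "0 \<le> a" "0 \<le> b" "0 \<le> A" "a\<^sup>2 / 2 + b \<le> A * a"
  shows "a \<le> 2 * A" and "b \<le> A\<^sup>2 / 2"
proof -
  have "a * a \<le> (2 * A) * a" using assms by (simp add: power2_eq_square)
  then show "a \<le> 2 * A" using assms(1,3) by (cases "a = 0") (auto simp: mult_le_cancel_right)
  have "0 \<le> (a - A)\<^sup>2" by simp
  moreover have "(a - A)\<^sup>2 = a\<^sup>2 - 2 * (A * a) + A\<^sup>2" by (simp add: power2_eq_square algebra_simps)
  ultimately show "b \<le> A\<^sup>2 / 2" using assms(4) by linarith
qed

lemma linear_proj_adjoint:
  fixes L :: "'a::euclidean_space \<Rightarrow> 'b::euclidean_space"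
  assumes "subspace V" "linear L"
  shows "linear (\<lambda>x. proj V (adjoint L x))"
  using linear_compose[OF adjoint_linear[OF assms(2)] linear_proj[OF assms(1)]]
  by (simp add: comp_def)

lemma minimizer_fidelity_bound:
  fixes \<Phi> :: "'n::euclidean_space \<Rightarrow> 'm::euclidean_space" and L :: "'p::euclidean_space \<Rightarrow> 'n"
  assumes "linear \<Phi>" "linear L" "is_norm nA"
    and \<alpha>: "\<alpha> \<in> subdiff nA (adjoint L x0)" and source: "adjoint \<Phi> \<eta> = L \<alpha>"
    and "0 \<le> lam" "norm w \<le> \<epsilon>"
    and min: "(1/2) * (norm (\<Phi> x0 + w - \<Phi> xs))\<^sup>2 + lam * nA (adjoint L xs)
              \<le> (1/2) * (norm (\<Phi> x0 + w - \<Phi> x0))\<^sup>2 + lam * nA (adjoint L x0)"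
  shows "(norm (\<Phi> (xs - x0)))\<^sup>2 / 2 + lam * (nA (adjoint L xs) - \<alpha> \<bullet> adjoint L xs)
           \<le> (\<epsilon> + lam * norm \<eta>) * norm (\<Phi> (xs - x0))"
proof -
  define h where "h = xs - x0"
  define a where "a = norm (\<Phi> h)"
  have residual: "\<Phi> x0 + w - \<Phi> xs = w - \<Phi> h"
    unfolding h_def by (simp add: linear_diff[OF assms(1)])
  have "(norm (w - \<Phi> h))\<^sup>2 = (norm w)\<^sup>2 - 2 * (w \<bullet> \<Phi> h) + a\<^sup>2"
    unfolding a_def by (simp add: power2_norm_eq_inner inner_diff_left inner_diff_right inner_commute)
  moreover have "\<alpha> \<bullet> adjoint L xs - nA (adjoint L x0) = \<eta> \<bullet> \<Phi> h"
  proof -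
    have "\<alpha> \<bullet> adjoint L xs - \<alpha> \<bullet> adjoint L x0 = \<alpha> \<bullet> adjoint L h"
      unfolding h_def by (simp add: linear_diff[OF adjoint_linear[OF assms(2)]] inner_diff_right)
    also have "\<dots> = adjoint \<Phi> \<eta> \<bullet> h" by (simp add: adjoint_works[OF assms(2)] source)
    also have "\<dots> = \<eta> \<bullet> \<Phi> h" by (rule adjoint_clauses(2)[OF assms(1)])
    finally show ?thesis using subdiff_norm_inner_eq[OF assms(3) \<alpha>] by simp
  qed
  ultimately have "a\<^sup>2 / 2 + lam * (nA (adjoint L xs) - \<alpha> \<bullet> adjoint L xs)
      \<le> w \<bullet> \<Phi> h + lam * (- \<eta> \<bullet> \<Phi> h)"
    using min unfolding residual by (simp add: algebra_simps)
  also have "\<dots> \<le> \<epsilon> * a + lam * (norm \<eta> * a)"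
  proof (intro add_mono mult_left_mono)
    show "w \<bullet> \<Phi> h \<le> \<epsilon> * a"
      using norm_cauchy_schwarz[of w "\<Phi> h"] \<open>norm w \<le> \<epsilon>\<close> unfolding a_def
      by (meson mult_right_mono norm_ge_zero order.trans)
    show "- \<eta> \<bullet> \<Phi> h \<le> norm \<eta> * a"
      using norm_cauchy_schwarz[of "- \<eta>" "\<Phi> h"] unfolding a_def by simp
  qed (rule \<open>0 \<le> lam\<close>)
  finally show ?thesis unfolding a_def h_def by (simp add: algebra_simps)
qed

lemma decomposable_minimizer_estimates:
  fixes \<Phi> :: "'n::euclidean_space \<Rightarrow> 'm::euclidean_space" and L :: "'p::euclidean_space \<Rightarrow> 'n"
  assumes "linear \<Phi>" "linear L" "is_norm nA"
    and dec: "decomposable_at nA (adjoint L x0) T e"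
    and \<alpha>: "\<alpha> \<in> subdiff nA (adjoint L x0)" and source: "adjoint \<Phi> \<eta> = L \<alpha>"
    and \<delta>: "dual_norm nA (proj (T\<^sup>\<bottom>) \<alpha>) < 1"
    and "0 < \<epsilon>" "norm w \<le> \<epsilon>" "0 < c"
    and min: "(1/2) * (norm (\<Phi> x0 + w - \<Phi> xs))\<^sup>2 + (c * \<epsilon>) * nA (adjoint L xs)
              \<le> (1/2) * (norm (\<Phi> x0 + w - \<Phi> x0))\<^sup>2 + (c * \<epsilon>) * nA (adjoint L x0)"
  shows "norm (\<Phi> (xs - x0)) \<le> 2 * (2 + c * norm \<eta>) * \<epsilon>"
    and "nA (proj (T\<^sup>\<bottom>) (adjoint L (xs - x0)))
           \<le> 2 * (1 + c * norm \<eta> / 2)\<^sup>2 / (c * (1 - dual_norm nA (proj (T\<^sup>\<bottom>) \<alpha>))) * \<epsilon>"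
proof -
  define a where "a = norm (\<Phi> (xs - x0))"
  define N where "N = nA (proj (T\<^sup>\<bottom>) (adjoint L (xs - x0)))"
  define E where "E = nA (adjoint L xs) - \<alpha> \<bullet> adjoint L xs"
  define D where "D = c * (1 - dual_norm nA (proj (T\<^sup>\<bottom>) \<alpha>))"
  define n where "n = norm \<eta>"
  define A where "A = \<epsilon> * (1 + c * n)"
  have "0 < D" "0 \<le> n" "0 \<le> N" "0 \<le> a"
    using \<delta> \<open>0 < c\<close> is_norm_nonneg[OF assms(3)] by (simp_all add: D_def n_def N_def a_def)
  have "proj (T\<^sup>\<bottom>) (adjoint L (xs - x0)) = proj (T\<^sup>\<bottom>) (adjoint L xs)"
    using linear_diff[OF linear_proj_adjoint[OF subspace_orthogonal_comp[of T] assms(2)], of xs x0]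
      decomposable_at_proj_point[OF assms(3) dec]
    by simp
  then have NE: "(1 - dual_norm nA (proj (T\<^sup>\<bottom>) \<alpha>)) * N \<le> E"
    unfolding N_def E_def by (metis decomposable_at_bregman_lower_bound[OF assms(3) dec \<alpha>])
  then have "0 \<le> E" using \<delta> \<open>0 \<le> N\<close> by (meson diff_gt_0_iff_gt mult_nonneg_nonneg less_imp_le order.trans)
  have "a\<^sup>2 / 2 + (c * \<epsilon>) * E \<le> A * a"
    using minimizer_fidelity_bound[OF assms(1-3) \<alpha> source _ \<open>norm w \<le> \<epsilon>\<close> min] \<open>0 < c\<close> \<open>0 < \<epsilon>\<close>
    unfolding a_def E_def A_def n_def by (simp add: algebra_simps)
  moreover have "0 \<le> A" using \<open>0 < \<epsilon>\<close> \<open>0 < c\<close> \<open>0 \<le> n\<close> by (simp add: A_def)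
  moreover have "0 \<le> (c * \<epsilon>) * E" using \<open>0 < \<epsilon>\<close> \<open>0 < c\<close> \<open>0 \<le> E\<close> by simp
  ultimately have a_le: "a \<le> 2 * A" and E_le: "(c * \<epsilon>) * E \<le> A\<^sup>2 / 2"
    using quadratic_inequality_bounds[OF \<open>0 \<le> a\<close>] by blast+
  from a_le show "norm (\<Phi> (xs - x0)) \<le> 2 * (2 + c * norm \<eta>) * \<epsilon>"
    using \<open>0 < \<epsilon>\<close> \<open>0 < c\<close> \<open>0 \<le> n\<close> unfolding a_def A_def n_def by (simp add: algebra_simps)
  have "\<epsilon> * (D * N) \<le> (c * \<epsilon>) * E"
    using NE \<open>0 < \<epsilon>\<close> \<open>0 < c\<close> unfolding D_def by (simp add: mult_left_mono)
  also have "\<dots> \<le> \<epsilon> * (\<epsilon> * (1 + c * n)\<^sup>2 / 2)"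
    using E_le by (simp add: A_def power2_eq_square ac_simps)
  finally have "D * N \<le> \<epsilon> * (1 + c * n)\<^sup>2 / 2" using \<open>0 < \<epsilon>\<close> by simp
  also have "\<dots> \<le> \<epsilon> * (2 * (1 + c * n / 2)\<^sup>2)"
    using \<open>0 < \<epsilon>\<close> \<open>0 < c\<close> \<open>0 \<le> n\<close> by (simp add: power2_eq_square algebra_simps)
  finally show "N \<le> 2 * (1 + c * n / 2)\<^sup>2 / D * \<epsilon>"
    using \<open>0 < D\<close> by (simp add: field_simps)
qed

lemma decomposable_minimizer_error_bound:
  fixes \<Phi> :: "'n::euclidean_space \<Rightarrow> 'm::euclidean_space" and L :: "'p::euclidean_space \<Rightarrow> 'n"
  assumes "linear \<Phi>" "linear L" "is_norm nA"
    and dec: "decomposable_at nA (adjoint L x0) T e"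
    and k: "k > 0" "\<And>u. k * norm u \<le> nA u"
    and B: "B > 0" "\<And>x. B * norm x \<le> norm (\<Phi> x) + norm (proj (T\<^sup>\<bottom>) (adjoint L x))"
    and \<alpha>: "\<alpha> \<in> subdiff nA (adjoint L x0)" and source: "adjoint \<Phi> \<eta> = L \<alpha>"
    and \<delta>: "dual_norm nA (proj (T\<^sup>\<bottom>) \<alpha>) < 1"
    and "0 < \<epsilon>" "norm w \<le> \<epsilon>" "0 < c"
    and min: "(1/2) * (norm (\<Phi> x0 + w - \<Phi> xs))\<^sup>2 + (c * \<epsilon>) * nA (adjoint L xs)
              \<le> (1/2) * (norm (\<Phi> x0 + w - \<Phi> x0))\<^sup>2 + (c * \<epsilon>) * nA (adjoint L x0)"
  shows "norm (xs - x0) \<le> (2 / B * (2 + c * norm \<eta>)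
           + 2 / (B * k) * (1 + c * norm \<eta> / 2)\<^sup>2 / (c * (1 - dual_norm nA (proj (T\<^sup>\<bottom>) \<alpha>)))) * \<epsilon>"
proof -
  define h where "h = xs - x0"
  define D where "D = c * (1 - dual_norm nA (proj (T\<^sup>\<bottom>) \<alpha>))"
  define n where "n = norm \<eta>"
  note estimates = decomposable_minimizer_estimates[OF assms(1-4) \<alpha> source \<delta> \<open>0 < \<epsilon>\<close> \<open>norm w \<le> \<epsilon>\<close>
      \<open>0 < c\<close> min, folded h_def n_def D_def]
  have "0 < D" using \<delta> \<open>0 < c\<close> by (simp add: D_def)
  have "k * norm (proj (T\<^sup>\<bottom>) (adjoint L h)) \<le> 2 * (1 + c * n / 2)\<^sup>2 / D * \<epsilon>"
    using k(2) estimates(2) by (rule order.trans)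
  then have "norm (proj (T\<^sup>\<bottom>) (adjoint L h)) \<le> 2 * (1 + c * n / 2)\<^sup>2 / D * \<epsilon> / k"
    using k(1) \<open>0 < D\<close> by (simp add: field_simps)
  then have "B * norm h \<le> 2 * (2 + c * n) * \<epsilon> + 2 * (1 + c * n / 2)\<^sup>2 / D * \<epsilon> / k"
    using B(2)[of h] estimates(1) by linarith
  then have "norm h \<le> (2 * (2 + c * n) * \<epsilon> + 2 * (1 + c * n / 2)\<^sup>2 / D * \<epsilon> / k) / B"
    using B(1) by (simp add: pos_le_divide_eq mult.commute)
  also have "\<dots> = (2 / B * (2 + c * n) + 2 / (B * k) * (1 + c * n / 2)\<^sup>2 / D) * \<epsilon>"
    using B(1) k(1) \<open>0 < D\<close> by (simp add: field_simps)
  finally show ?thesis unfolding h_def n_def D_def .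
qed

theorem theorem2:
  fixes \<Phi> :: "real^'n \<Rightarrow> real^'m" and L :: "real^'p \<Rightarrow> real^'n"
    and nA :: "real^'p \<Rightarrow> real" and x0 :: "real^'n"
    and T0 :: "(real^'p) set" and e0 :: "real^'p"
  assumes "linear \<Phi>" and "linear L" and "is_norm nA"
    and "decomposable_at nA (adjoint L x0) T0 e0"
    and "\<exists>\<eta> \<alpha>. \<alpha> \<in> subdiff nA (adjoint L x0) \<and> adjoint \<Phi> \<eta> = L \<alpha>
              \<and> dual_norm nA (proj (orthogonal_comp T0) \<alpha>) < 1"
    and "inj_on \<Phi> {x. proj (orthogonal_comp T0) (adjoint L x) = 0}"
  shows "\<exists>C1>0. \<exists>C2>0. \<forall>\<eta> \<alpha>.
     \<alpha> \<in> subdiff nA (adjoint L x0) \<and> adjoint \<Phi> \<eta> = L \<alpha>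
       \<and> dual_norm nA (proj (orthogonal_comp T0) \<alpha>) < 1 \<longrightarrow>
     (\<forall>\<epsilon> > 0. \<forall>w c xs. norm w \<le> \<epsilon> \<and> c > 0 \<and>
        (\<forall>x. (1/2) * (norm (\<Phi> x0 + w - \<Phi> xs))\<^sup>2 + (c * \<epsilon>) * nA (adjoint L xs)
             \<le> (1/2) * (norm (\<Phi> x0 + w - \<Phi> x))\<^sup>2 + (c * \<epsilon>) * nA (adjoint L x)) \<longrightarrow>
        norm (xs - x0) \<le>
          (C1 * (2 + c * norm \<eta>)
           + C2 * (1 + c * norm \<eta> / 2)\<^sup>2
                  / (c * (1 - dual_norm nA (proj (orthogonal_comp T0) \<alpha>)))) * \<epsilon>)"
proof -
  obtain k where k: "k > 0" "\<And>u. k * norm u \<le> nA u"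
    using is_norm_bounded_below[OF assms(3)] by blast
  obtain B where B: "B > 0"
    "\<And>x. B * norm x \<le> norm (\<Phi> x) + norm (proj (orthogonal_comp T0) (adjoint L x))"
    using linear_inj_on_kernel_bounded_below[OF assms(1)
        linear_proj_adjoint[OF subspace_orthogonal_comp assms(2)] assms(6)] by blast
  show ?thesis
  proof (rule exI[of _ "2 / B"], intro conjI exI[of _ "2 / (B * k)"] allI impI)
    show "2 / B > 0" "2 / (B * k) > 0" using B(1) k(1) by simp_all
  qed (use decomposable_minimizer_error_bound[OF assms(1-4) k B] in blast)
qed

end
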